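(* Let $f(z) = e^{2\pi i\alpha}z+O(z^2)$, $\alpha\in\mathbb{R}\setminus\mathbb{Q}$, be a nonlinearizable germ, and let $g$ be a nondegenerate parabolic germ. Then $f$ and $g$ do not commute, i.e. $f\circ g\neq g\circ f$ as germs.
   Context: A germ $f(z)=e^{2\pi i\alpha}z+O(z^2)$ with $\alpha$ irrational is linearizable if there is a holomorphic $h(w)=w+O(w^2)$ with $h^{-1}\circ f\circ h=R_\alpha$, $R_\alpha(w)=e^{2\pi i\alpha}w$; otherwise nonlinearizable. A nondegenerate parabolic germ is a germ $g\in\mathrm{Diff}(\mathbb{C},0)$ with $g'(0)=e^{2\pi i p/q}$ a root of unity (so $g^q$ is tangent to the identity) such that $g^q\neq \mathrm{id}$. *)

theory Defs
  imports "HOL-Complex_Analysis.Complex_Analysis"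
begin

text \<open>A holomorphic germ at 0 fixing 0: represented by a function holomorphic
  on some disc around 0 with f 0 = 0. Germ equality = eventual equality in nhds 0.\<close>

definition holo_germ :: "(complex \<Rightarrow> complex) \<Rightarrow> bool" where
  "holo_germ f \<longleftrightarrow> (\<exists>r>0. f holomorphic_on ball 0 r) \<and> f 0 = 0"

definition germ_eq :: "(complex \<Rightarrow> complex) \<Rightarrow> (complex \<Rightarrow> complex) \<Rightarrow> bool" where
  "germ_eq f g \<longleftrightarrow> (\<forall>\<^sub>F z in nhds 0. f z = g z)"

definition rot :: "real \<Rightarrow> complex \<Rightarrow> complex" where
  "rot \<alpha> w = exp (2 * pi * \<i> * of_real \<alpha>) * w"

definition linearizable :: "real \<Rightarrow> (complex \<Rightarrow> complex) \<Rightarrow> bool" where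
  "linearizable \<alpha> f \<longleftrightarrow>
     (\<exists>h r. r > 0 \<and> h holomorphic_on ball 0 r \<and> inj_on h (ball 0 r) \<and>
            h 0 = 0 \<and> deriv h 0 = 1 \<and>
            germ_eq (\<lambda>w. inv_into (ball 0 r) h (f (h w))) (rot \<alpha>))"

definition nondegenerate_parabolic :: "(complex \<Rightarrow> complex) \<Rightarrow> bool" where
  "nondegenerate_parabolic g \<longleftrightarrow>
     holo_germ g \<and> deriv g 0 \<noteq> 0 \<and>
     (\<exists>(p::int) (q::nat). q > 0 \<and> coprime p (int q) \<and>
        deriv g 0 = exp (2 * pi * \<i> * of_real (real_of_int p / real q)) \<and>
        \<not> germ_eq (g ^^ q) id)"

end

theory Submission imports Defs begin

text \<open>Commuting with a nondegenerate parabolic germ already forces the multiplier of \<open>f\<close> to be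
  a root of unity. Some iterate \<open>G = g\<^sup>q\<close> is tangent
  to the identity without being the identity, so \<open>G z = z + z\<^sup>n u z\<close> with \<open>n \<ge> 2\<close> and \<open>u 0 \<noteq> 0\<close>.
  Dividing \<open>f (G z) - f z = f z\<^sup>n u (f z)\<close> by \<open>z\<^sup>n u z\<close> and letting \<open>z \<rightarrow> 0\<close> gives
  \<open>f' 0 = (f' 0)\<^sup>n\<close>, hence \<open>(f' 0) ^ (n - 1) = 1\<close> and \<open>\<alpha>\<close> would be rational.\<close>

lemma holomorphic_on_ball_imp_isCont:
  "f holomorphic_on ball c r \<Longrightarrow> r > 0 \<Longrightarrow> isCont f c"
  by (meson centre_in_ball continuous_on_eq_continuous_at holomorphic_on_imp_continuous_on open_ball)

lemma holomorphic_difference_quotient_tendsto: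
  fixes f :: "complex \<Rightarrow> complex" and a b :: "'x \<Rightarrow> complex"
  assumes "r > 0" and hol: "f holomorphic_on ball c r"
    and a: "(a \<longlongrightarrow> c) F" and b: "(b \<longlongrightarrow> c) F"
    and ne: "\<forall>\<^sub>F x in F. a x \<noteq> b x"
  shows "((\<lambda>x. (f (b x) - f (a x)) / (b x - a x)) \<longlongrightarrow> deriv f c) F"
proof (rule tendstoI)
  fix e :: real assume "e > 0"
  define L where "L = deriv f c"
  have "isCont (deriv f) c"
    using holomorphic_on_ball_imp_isCont[OF holomorphic_deriv[OF hol open_ball] \<open>r > 0\<close>] .
  then obtain d where "d > 0" and d: "\<And>w. dist w c < d \<Longrightarrow> dist (deriv f w) L < e/2"
    unfolding L_def continuous_at_eps_delta using \<open>e > 0\<close> by (metis half_gt_zero)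
  define \<delta> where "\<delta> = min d r"
  have "\<delta> > 0" using \<open>d > 0\<close> \<open>r > 0\<close> by (simp add: \<delta>_def)
  have "\<forall>\<^sub>F x in F. a x \<in> ball c \<delta>" "\<forall>\<^sub>F x in F. b x \<in> ball c \<delta>"
    using tendstoD[OF a \<open>\<delta> > 0\<close>] tendstoD[OF b \<open>\<delta> > 0\<close>] by (simp_all add: dist_commute)
  with ne show "\<forall>\<^sub>F x in F. dist ((f (b x) - f (a x)) / (b x - a x)) (deriv f c) < e"
  proof eventually_elim
    case (elim x)
    \<comment> \<open>mean value inequality for \<open>\<lambda>w. f w - L * w\<close>, whose derivative is small on \<open>ball c \<delta>\<close>\<close>
    have "norm ((f (b x) - L * b x) - (f (a x) - L * a x)) \<le> e/2 * norm (b x - a x)"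
    proof (rule field_differentiable_bound[OF convex_ball])
      fix w assume w: "w \<in> ball c \<delta>"
      then have "w \<in> ball c r" by (simp add: \<delta>_def)
      then have "(f has_field_derivative deriv f w) (at w within ball c \<delta>)"
        using holomorphic_derivI[OF hol open_ball] has_field_derivative_at_within by blast
      then show "((\<lambda>w. f w - L * w) has_field_derivative deriv f w - L) (at w within ball c \<delta>)"
        by (auto intro!: derivative_eq_intros)
      show "norm (deriv f w - L) \<le> e/2"
        using d[of w] w by (simp add: \<delta>_def dist_norm norm_minus_commute)
    qed (use elim in auto)
    moreover have "(f (b x) - f (a x)) / (b x - a x) - L
        = ((f (b x) - L * b x) - (f (a x) - L * a x)) / (b x - a x)"
      using elim(1) by (simp add: field_simps)
    ultimately have "dist ((f (b x) - f (a x)) / (b x - a x)) L \<le> e/2"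
      using elim(1) by (simp add: dist_norm norm_divide divide_le_eq)
    then show ?case using \<open>e > 0\<close> by (simp add: L_def)
  qed
qed

lemma deriv_eq_power_if_commutes_with_tangent:
  fixes f G u :: "complex \<Rightarrow> complex"
  assumes "r > 0" and hol: "f holomorphic_on ball 0 r" and "f 0 = 0"
    and u: "isCont u 0" "u 0 \<noteq> 0" and "m > 0"
    and G: "\<forall>\<^sub>F z in nhds 0. G z = z + z ^ m * u z"
    and comm: "\<forall>\<^sub>F z in nhds 0. f (G z) = G (f z)"
  shows "deriv f 0 = deriv f 0 ^ m"
proof -
  define L where "L = deriv f 0"
  have "(f has_field_derivative L) (at 0)"
    using holomorphic_derivI[OF hol open_ball] \<open>r > 0\<close> by (simp add: L_def)
  then have quotient: "((\<lambda>z. f z / z) \<longlongrightarrow> L) (at 0)"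
    using \<open>f 0 = 0\<close> by (simp add: has_field_derivative_iff)
  have "isCont f 0"
    using DERIV_isCont[OF \<open>(f has_field_derivative L) (at 0)\<close>] .
  then have f_at: "(f \<longlongrightarrow> 0) (at 0)" and f_nhds: "filterlim f (nhds 0) (nhds 0)"
    using \<open>f 0 = 0\<close> by (metis isCont_def, metis isCont_def tendsto_at_iff_tendsto_nhds)
  have "\<forall>\<^sub>F z in nhds 0. f (z + z ^ m * u z) = f z + f z ^ m * u (f z)"
    using G comm eventually_compose_filterlim[OF G f_nhds] by eventually_elim simp
  then have comm': "\<forall>\<^sub>F z in at 0. f (z + z ^ m * u z) = f z + f z ^ m * u (f z)"
    by (simp add: eventually_at_filter eventually_mono)
  from f_at have "((\<lambda>z. u (f z)) \<longlongrightarrow> u 0) (at 0)"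
    using isCont_tendsto_compose[OF u(1)] by blast
  with quotient have rhs: "((\<lambda>z. (f z / z) ^ m * u (f z)) \<longlongrightarrow> L ^ m * u 0) (at 0)"
    by (intro tendsto_intros)
  have u_at: "(u \<longlongrightarrow> u 0) (at 0)"
    using u(1) by (simp add: isCont_def)
  have u_ne: "\<forall>\<^sub>F z in at 0. u z \<noteq> 0"
    using tendsto_imp_eventually_ne[OF u_at u(2)] .
  have "((\<lambda>z. z + z ^ m * u z) \<longlongrightarrow> 0 + 0 ^ m * u 0) (at 0)"
    by (intro tendsto_intros u_at)
  then have shift: "((\<lambda>z. z + z ^ m * u z) \<longlongrightarrow> 0) (at 0)"
    using \<open>m > 0\<close> by (simp add: zero_power)
  have "\<forall>\<^sub>F z in at 0. z \<noteq> z + z ^ m * u z"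
    using u_ne by (simp add: eventually_at_filter)
  from holomorphic_difference_quotient_tendsto[OF \<open>r > 0\<close> hol tendsto_ident_at shift this]
  have "((\<lambda>z. (f (z + z ^ m * u z) - f z) / (z ^ m * u z)) \<longlongrightarrow> L) (at 0)"
    by (simp add: L_def)
  then have lhs: "((\<lambda>z. (f (z + z ^ m * u z) - f z) / (z ^ m * u z) * u z) \<longlongrightarrow> L * u 0) (at 0)"
    by (intro tendsto_intros u_at) simp
  have "\<forall>\<^sub>F z in at 0. (f (z + z ^ m * u z) - f z) / (z ^ m * u z) * u z = (f z / z) ^ m * u (f z)"
    using u_ne comm' by eventually_elim (simp add: power_divide)
  with lhs have "((\<lambda>z. (f z / z) ^ m * u (f z)) \<longlongrightarrow> L * u 0) (at 0)"
    by (rule Lim_transform_eventually)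
  then have "L * u 0 = L ^ m * u 0"
    using rhs tendsto_unique by force
  then show ?thesis using u(2) by (simp add: L_def)
qed

lemma funpow_fixed_point: "g c = c \<Longrightarrow> (g ^^ n) c = c"
  by (induction n) simp_all

lemma analytic_at_funpow_fixed_point:
  assumes "g analytic_on {c}" "g c = c"
  shows "(g ^^ n) analytic_on {c}"
proof (induction n)
  case (Suc n)
  then show ?case
    using analytic_on_compose[OF Suc, of g] assms funpow_fixed_point[of g c n] by (simp add: o_def)
qed simp

lemma has_field_derivative_funpow_fixed_point:
  assumes "(g has_field_derivative \<mu>) (at c)" "g c = c"
  shows "((g ^^ n) has_field_derivative \<mu> ^ n) (at c)"
proof (induction n)
  case (Suc n)
  have "(g has_field_derivative \<mu>) (at ((g ^^ n) c))"
    using assms funpow_fixed_point[of g c n] by simp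
  from DERIV_chain[OF this Suc] show ?case by (simp add: o_def)
qed simp

lemma eventually_commute_funpow:
  assumes comm: "\<forall>\<^sub>F z in nhds c. f (g z) = g (f z)" and "isCont g c" "g c = c"
  shows "\<forall>\<^sub>F z in nhds c. f ((g ^^ n) z) = (g ^^ n) (f z)"
proof (induction n)
  case (Suc n)
  have "filterlim g (nhds c) (nhds c)"
    using \<open>isCont g c\<close> \<open>g c = c\<close> by (metis isCont_def tendsto_at_iff_tendsto_nhds)
  from eventually_compose_filterlim[OF Suc this]
  have "\<forall>\<^sub>F z in nhds c. f ((g ^^ n) (g z)) = (g ^^ n) (f (g z))" .
  with comm show ?case
    by eventually_elim (simp add: funpow_Suc_right del: funpow.simps)
qed simp

lemma tangent_to_identity_normal_form:
  fixes G :: "complex \<Rightarrow> complex"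
  assumes "G analytic_on {0}" "G 0 = 0" "(G has_field_derivative 1) (at 0)"
    and nonid: "\<not> germ_eq G id"
  obtains n u r where "n \<ge> 2" "r > 0" "u holomorphic_on ball 0 r" "u 0 \<noteq> 0"
    "\<And>w. w \<in> ball 0 r \<Longrightarrow> G w = w + w ^ n * u w"
proof -
  obtain R where "R > 0" "G holomorphic_on ball 0 R"
    using assms(1) analytic_at_ball by blast
  define H where "H = (\<lambda>w. G w - w)"
  have H: "H holomorphic_on ball 0 R" "H 0 = 0" "(H has_field_derivative 0) (at 0)"
    using \<open>G holomorphic_on ball 0 R\<close> assms(2,3)
    by (auto simp: H_def intro!: holomorphic_intros derivative_eq_intros)
  have nonconst: "\<not> H constant_on ball 0 R"
  proof
    assume "H constant_on ball 0 R"
    then have "\<And>w. w \<in> ball 0 R \<Longrightarrow> H w = H 0"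
      using \<open>R > 0\<close> unfolding constant_on_def by auto
    then have "\<And>w. w \<in> ball 0 R \<Longrightarrow> G w = id w"
      using \<open>H 0 = 0\<close> by (simp add: H_def)
    then have "germ_eq G id"
      unfolding germ_eq_def using eventually_nhds_in_open[of "ball 0 R" 0] \<open>R > 0\<close>
      by (auto elim: eventually_mono)
    with nonid show False ..
  qed
  have "0 \<in> ball 0 R" using \<open>R > 0\<close> by simp
  obtain n r u where "n > 0" "r > 0"
    and u: "u holomorphic_on ball 0 r"
    and H_eq: "\<And>w. w \<in> ball 0 r \<Longrightarrow> H w = (w - 0) ^ n * u w"
    and u_ne: "\<And>w. w \<in> ball 0 r \<Longrightarrow> u w \<noteq> 0"
    by (rule holomorphic_factor_zero_nonconstant[OF H(1) open_ball connected_ball \<open>0 \<in> ball 0 R\<close> H(2) nonconst]) (rule that)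
  have "u 0 \<noteq> 0" using u_ne \<open>r > 0\<close> by simp
  have "n \<noteq> 1"
  proof
    assume "n = 1"
    have "(u has_field_derivative deriv u 0) (at 0)"
      using holomorphic_derivI[OF u open_ball] \<open>r > 0\<close> by simp
    then have "((\<lambda>w. w * u w) has_field_derivative u 0) (at 0)"
      by (auto intro!: derivative_eq_intros)
    then have "(H has_field_derivative u 0) (at 0)"
      by (rule has_field_derivative_transform_within_open[of _ _ _ "ball 0 r"])
         (use \<open>r > 0\<close> H_eq \<open>n = 1\<close> in auto)
    with H(3) \<open>u 0 \<noteq> 0\<close> show False using DERIV_unique by blast
  qed
  with \<open>n > 0\<close> have "n \<ge> 2" by simp
  show thesis
    by (rule that[OF \<open>n \<ge> 2\<close> \<open>r > 0\<close> u \<open>u 0 \<noteq> 0\<close>]) (use H_eq in \<open>simp add: H_def algebra_simps\<close>)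
qed

lemma exp_2pi_rational_power_eq_1:
  fixes p :: int and q :: nat
  assumes "q > 0"
  shows "exp (2 * pi * \<i> * of_real (real_of_int p / real q)) ^ q = 1"
proof -
  have "exp (2 * pi * \<i> * of_real (real_of_int p / real q)) ^ q
      = exp (of_int p * (2 * of_real pi * \<i>))"
    using assms by (simp flip: exp_of_nat_mult add: field_simps)
  also have "\<dots> = 1"
    unfolding exp_eq_1 by (auto intro!: exI[of _ p])
  finally show ?thesis .
qed

lemma rational_if_exp_2pi_power_eq_1:
  fixes \<alpha> :: real and k :: nat
  assumes "k > 0" "exp (2 * pi * \<i> * of_real \<alpha>) ^ k = 1"
  shows "\<alpha> \<in> \<rat>"
proof -
  have "exp (of_nat k * (2 * pi * \<i> * of_real \<alpha>)) = 1"
    using assms(2) by (simp only: exp_of_nat_mult)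
  then obtain n :: int where "real k * (2 * pi * \<alpha>) = 2 * real_of_int n * pi"
    unfolding exp_eq_1 by auto
  then have "\<alpha> = real_of_int n / real k"
    using assms(1) by (simp add: field_simps)
  then show ?thesis by simp
qed

lemma nondegenerate_parabolic_iterate_normal_form:
  assumes "nondegenerate_parabolic g"
  obtains q n u r where "n \<ge> 2" "r > 0" "u holomorphic_on ball 0 r" "u 0 \<noteq> 0"
    "\<And>w. w \<in> ball 0 r \<Longrightarrow> (g ^^ q) w = w + w ^ n * u w"
proof -
  obtain rg p q where "rg > 0" "g holomorphic_on ball 0 rg" "g 0 = 0" "q > 0"
    and g_mult: "deriv g 0 = exp (2 * pi * \<i> * of_real (real_of_int p / real q))"
    and nondeg: "\<not> germ_eq (g ^^ q) id"
    using assms unfolding nondegenerate_parabolic_def holo_germ_def by blast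
  then have g_an: "g analytic_on {0}" and g_der: "(g has_field_derivative deriv g 0) (at 0)"
    using analytic_at_ball holomorphic_derivI[of g "ball 0 rg" 0] by auto
  have "deriv g 0 ^ q = 1"
    unfolding g_mult by (rule exp_2pi_rational_power_eq_1[OF \<open>q > 0\<close>])
  then have der: "((g ^^ q) has_field_derivative 1) (at 0)"
    using has_field_derivative_funpow_fixed_point[OF g_der \<open>g 0 = 0\<close>, of q] by simp
  have "(g ^^ q) analytic_on {0}" "(g ^^ q) 0 = 0"
    using analytic_at_funpow_fixed_point[OF g_an] funpow_fixed_point \<open>g 0 = 0\<close> by auto
  then show thesis
    using tangent_to_identity_normal_form[OF _ _ der nondeg] that by metis
qed

theorem theorem3p6:
  fixes f g :: "complex \<Rightarrow> complex" and \<alpha> :: real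
  assumes "\<alpha> \<notin> \<rat>"
    and "holo_germ f"
    and "deriv f 0 = exp (2 * pi * \<i> * of_real \<alpha>)"
    and "\<not> linearizable \<alpha> f"
    and "nondegenerate_parabolic g"
  shows "\<not> germ_eq (f \<circ> g) (g \<circ> f)"
proof
  assume "germ_eq (f \<circ> g) (g \<circ> f)"
  then have comm: "\<forall>\<^sub>F z in nhds 0. f (g z) = g (f z)"
    by (simp add: germ_eq_def)
  obtain rf where "rf > 0" and f_hol: "f holomorphic_on ball 0 rf" and "f 0 = 0"
    using assms(2) unfolding holo_germ_def by blast
  obtain rg where "rg > 0" "g holomorphic_on ball 0 rg" "g 0 = 0"
    using assms(5) unfolding nondegenerate_parabolic_def holo_germ_def by blast
  then have "\<forall>\<^sub>F z in nhds 0. f ((g ^^ q) z) = (g ^^ q) (f z)" for q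
    using eventually_commute_funpow[OF comm holomorphic_on_ball_imp_isCont] by blast
  moreover obtain q n u r where "n \<ge> 2" "r > 0" and u: "u holomorphic_on ball 0 r" "u 0 \<noteq> 0"
    and normal_form: "\<And>w. w \<in> ball 0 r \<Longrightarrow> (g ^^ q) w = w + w ^ n * u w"
    using nondegenerate_parabolic_iterate_normal_form[OF assms(5)] by metis
  moreover have "\<forall>\<^sub>F w in nhds 0. (g ^^ q) w = w + w ^ n * u w"
    using \<open>r > 0\<close> normal_form eventually_nhds_in_open[of "ball 0 r" 0]
    by (auto elim: eventually_mono)
  ultimately have "deriv f 0 = deriv f 0 ^ n"
    using deriv_eq_power_if_commutes_with_tangent[OF \<open>rf > 0\<close> f_hol \<open>f 0 = 0\<close>
        holomorphic_on_ball_imp_isCont[OF u(1) \<open>r > 0\<close>] u(2)] \<open>n \<ge> 2\<close>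
    by simp
  then have "exp (2 * pi * \<i> * of_real \<alpha>) ^ (n - 1) = 1"
    using assms(3) \<open>n \<ge> 2\<close> by (cases n) simp_all
  then show False
    using rational_if_exp_2pi_power_eq_1[of "n - 1"] \<open>n \<ge> 2\<close> assms(1) by simp
qed

end
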